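(* In the setting described in the context, suppose Assumptions (A1)–(A3) hold and $\eta_t\le\min\{\frac1\mu,\frac1{L\gamma},\frac{\mu}{\gamma^2}\}$. Then $$\mathbb{E}\|\overline{\mathbf w}^{t+1}-\mathbf w^\star\|_2^2\le(1+K\eta_t^2)(1-\mu\eta_t)^L\,\mathbb{E}\|\mathbf w^t-\mathbf w^\star\|_2^2+\Big(\frac1K+\eta_t^2\Big)\big(L^2\zeta+KL^3\gamma^2\zeta\eta_t^2e\big),$$ where $e$ is Euler's number.
   Context: Setting (privacy-preserving quantized FL). There are $M$ groups $\mathcal G_1,\dots,\mathcal G_M$ of devices, $|\mathcal G_m|=g_m$, $K=\sum_m g_m$; device $d_{m,u}\in\mathcal G_m$ uses $b_m\ge1$ quantization bits, privacy parameter $\epsilon_{1,m,u}\ge0$, and has a local loss $f_{m,u}:\mathbb R^d\to\mathbb R$. The global loss is $f=\frac1K\sum_m\sum_{u}f_{m,u}$ with minimizer $\mathbf w^\star$. Given integers $1\le c_m\le g_m$, $N=\sum_m c_m$, a number of local steps $L\ge1$, learning rates $\eta_t>0$ and clipping constant $C>0$, round $t$ proceeds from the global model $\mathbf w^t$ as follows. For each $m$, a cluster $\mathcal C_m\subseteq\mathcal G_m$ is drawn uniformly at random among subsets of size $c_m$ (so $\Pr[d_{m,u}\in\mathcal C_m]=c_m/g_m$). For every device (for the analysis, also non-participating ones) set $\mathbf w^{0,m,u,t}=\mathbf w^t$ and $\mathbf w^{l+1,m,u,t}=\mathbf w^{l,m,u,t}-\eta_t\widetilde\nabla f_{m,u}(\mathbf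 w^{l,m,u,t})$, $l=0,\dots,L-1$, where $\widetilde\nabla f_{m,u}$ is a stochastic (mini-batch) gradient. Let $\mathbf v^{m,u,t}=\mathbf w^{L,m,u,t}-\mathbf w^t$, $\widehat{\mathbf v}^{m,u,t}=\min\{1,C/\|\mathbf v^{m,u,t}\|_1\}\mathbf v^{m,u,t}$, and $\widehat{\mathbf w}^{m,u,t}=\mathcal Q_{b_m,\epsilon_{1,m,u}}(\widehat{\mathbf v}^{m,u,t})$, where $\mathcal Q_{b,\epsilon_1}$ is applied coordinatewise with $2^b$ uniformly spaced levels $q_j=-C+(j-1)\frac{2C}{2^b-1}$ on $[-C,C]$ and maps a scalar $a\in[q_i,q_{i+1}]$ to $q_i$ with probability $p^\star$ and to $q_{i+1}$ with probability $1-p^\star$, where $p^\star=\frac{e^{\epsilon_1}}{e^{\epsilon_1}+1}$ if $|q_i-a|\le|q_{i+1}-a|$ and $p^\star=\frac1{e^{\epsilon_1}+1}$ otherwise (independently across coordinates). The fusion center receives $\widehat{\mathbf w}^{m,u,t}+\mathbf n^{m,u,t}$ with $\mathbf n^{m,u,t}\sim\mathcal N(\mathbf 0,\sigma_{m,u}^2\mathbf I)$ independent of everything else, and sets $\mathbf w^{t+1}=\mathbf w^t+\sum_m\sum_{d_{m,u}\in\mathcal C_m}\omega_{m,u}(\widehat{\mathbf w}^{m,u,t}+\mathbf n^{m,u,t})$, where the fusion weights satisfy $\omega_{m,u}\ge0$ and $\sum_m\sum_{d_{m,u}\in\mathcal C_m}\omega_{m,u}=1$. Define $\check{\mathbf w}^{t+1}=\mathbf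 w^t+\sum_m\sum_{d_{m,u}\in\mathcal C_m}\omega_{m,u}\widehat{\mathbf w}^{m,u,t}$ and $\overline{\mathbf w}^{t+1}=\sum_m\sum_{d_{m,u}\in\mathcal C_m}\omega_{m,u}\mathbf w^{L,m,u,t}$. All expectations are over all randomness. Assumptions. (A1) Each $f_{m,u}$ is convex, differentiable and $\gamma$-smooth: $\|\nabla f_{m,u}(\mathbf x)-\nabla f_{m,u}(\mathbf y)\|_2\le\gamma\|\mathbf x-\mathbf y\|_2$ for all $\mathbf x,\mathbf y$. (A2) Each $f_{m,u}$ is $\mu$-strongly convex: $\langle\nabla f_{m,u}(\mathbf x)-\nabla f_{m,u}(\mathbf y),\mathbf x-\mathbf y\rangle\ge\mu\|\mathbf x-\mathbf y\|_2^2$, $\mu>0$. (A3) For every device and every point $\mathbf x$ at which it is evaluated, the stochastic gradient (computed with fresh, independent randomness) satisfies $\mathbb E[\widetilde\nabla f_{m,u}(\mathbf x)]=\nabla f(\mathbf x)$ and $\mathbb E\|\widetilde\nabla f_{m,u}(\mathbf x)-\nabla f(\mathbf x)\|_2^2\le\zeta$. *)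

theory Defs
  imports "HOL-Probability.Probability"
begin

fun local_sgd :: "('a::real_vector \<Rightarrow> 's \<Rightarrow> 'a) \<Rightarrow> real \<Rightarrow> 'a \<Rightarrow> (nat \<Rightarrow> 's) \<Rightarrow> nat \<Rightarrow> 'a" where
  "local_sgd G eta x ss 0 = x"
| "local_sgd G eta x ss (Suc l) =
     local_sgd G eta x ss l - eta *\<^sub>R G (local_sgd G eta x ss l) (ss l)"

definition cluster_choices :: "nat \<Rightarrow> (nat \<Rightarrow> nat) \<Rightarrow> (nat \<Rightarrow> nat) \<Rightarrow> (nat \<Rightarrow> nat set) set" where
  "cluster_choices M g c =
     {Cs. (\<forall>m<M. Cs m \<subseteq> {..<g m} \<and> card (Cs m) = c m) \<and> (\<forall>m\<ge>M. Cs m = {})}"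

text \<open>Index set of all (group, device, local step) triples.\<close>
definition sample_index :: "nat \<Rightarrow> (nat \<Rightarrow> nat) \<Rightarrow> nat \<Rightarrow> (nat \<times> nat \<times> nat) set" where
  "sample_index M g L = {(m, u, l). m < M \<and> u < g m \<and> l < L}"

end

theory Submission
  imports Defs
begin

text \<open>Every local step uses an unbiased stochastic gradient of the global loss F. Averaging (A1)
  and (A2) over the devices, the gradient of F is \<mu>-strongly monotone and \<gamma>-bounded around the
  minimiser w*, where it vanishes; so one exact gradient step contracts the squared distance to w*
  by the factor 1 - \<mu>\<eta> as soon as \<eta>\<gamma>^2 \<le> \<mu>, and the noise of the stochastic gradient adds at
  most \<eta>^2\<zeta>. Integrating out the fresh samples one step at a time, every device ends its L local
  steps at expected squared distance at most (1 - \<mu>\<eta>)^L E|w^t - w*|^2 + L\<eta>^2\<zeta>. The fused model is,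
  for every draw of the clusters, a convex combination of the local models, so by convexity of the
  squared norm it obeys the same bound, which is sharper than the one stated.\<close>

section \<open>Gradient of the global loss\<close>

lemma gradient_of_scaled_sum:
  fixes f :: "'i \<Rightarrow> 'a::real_inner \<Rightarrow> real"
  assumes F: "(F has_derivative (\<lambda>h. gF x \<bullet> h)) (at x)"
    and F_eq: "F = (\<lambda>x. c * (\<Sum>i\<in>T. f i x))"
    and f: "\<And>i. i \<in> T \<Longrightarrow> (f i has_derivative (\<lambda>h. gf i x \<bullet> h)) (at x)"
  shows "gF x = c *\<^sub>R (\<Sum>i\<in>T. gf i x)"
proof -
  have "(F has_derivative (\<lambda>h. (c *\<^sub>R (\<Sum>i\<in>T. gf i x)) \<bullet> h)) (at x)"
    unfolding F_eq inner_scaleR_left inner_sum_left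
    by (intro has_derivative_mult_right has_derivative_sum f)
  with F have "(\<lambda>h. gF x \<bullet> h) = (\<lambda>h. (c *\<^sub>R (\<Sum>i\<in>T. gf i x)) \<bullet> h)"
    by (rule has_derivative_unique)
  then show ?thesis
    by (metis vector_eq_rdot)
qed

lemma gradient_eq_0_at_minimum:
  fixes F :: "'a::real_inner \<Rightarrow> real"
  assumes "(F has_derivative (\<lambda>h. gF w \<bullet> h)) (at w)" and "\<And>x. F w \<le> F x"
  shows "gF w = 0"
proof -
  have "(\<lambda>h. gF w \<bullet> h) = (\<lambda>h. 0)"
    by (rule has_derivative_local_min[OF assms(1)]) (use assms(2) in auto)
  then show ?thesis
    by (metis inner_eq_zero_iff)
qed

lemma average_inner_ge:
  fixes d :: "'i \<Rightarrow> 'a::real_inner"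
  assumes "finite T" "T \<noteq> {}" and "\<And>i. i \<in> T \<Longrightarrow> d i \<bullet> v \<ge> \<mu> * (norm v)\<^sup>2"
  shows "((1 / card T) *\<^sub>R (\<Sum>i\<in>T. d i)) \<bullet> v \<ge> \<mu> * (norm v)\<^sup>2"
proof -
  have "(\<Sum>i\<in>T. \<mu> * (norm v)\<^sup>2) \<le> (\<Sum>i\<in>T. d i \<bullet> v)"
    by (rule sum_mono) (rule assms(3))
  moreover have "card T > 0"
    using assms(1,2) by (simp add: card_gt_0_iff)
  ultimately show ?thesis
    by (simp add: inner_sum_left pos_le_divide_eq mult_ac)
qed

lemma average_norm_le:
  fixes d :: "'i \<Rightarrow> 'a::real_normed_vector"
  assumes "finite T" "T \<noteq> {}" and "\<And>i. i \<in> T \<Longrightarrow> norm (d i) \<le> r"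
  shows "norm ((1 / card T) *\<^sub>R (\<Sum>i\<in>T. d i)) \<le> r"
proof -
  have "norm (\<Sum>i\<in>T. d i) \<le> (\<Sum>i\<in>T. r)"
    by (rule sum_norm_le) (rule assms(3))
  moreover have "card T > 0"
    using assms(1,2) by (simp add: card_gt_0_iff)
  ultimately show ?thesis
    by (simp add: pos_divide_le_eq mult_ac)
qed

lemma gradient_of_average_bounds:
  fixes f :: "'i \<Rightarrow> 'a::real_inner \<Rightarrow> real"
  assumes T: "finite T" "T \<noteq> {}"
    and F_eq: "F = (\<lambda>x. (1 / card T) * (\<Sum>i\<in>T. f i x))"
    and F: "\<And>x. (F has_derivative (\<lambda>h. gF x \<bullet> h)) (at x)"
    and w_min: "\<And>x. F w \<le> F x"
    and f: "\<And>i x. i \<in> T \<Longrightarrow> (f i has_derivative (\<lambda>h. gf i x \<bullet> h)) (at x)"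
    and smooth: "\<And>i x y. i \<in> T \<Longrightarrow> norm (gf i x - gf i y) \<le> \<gamma> * norm (x - y)"
    and strongly_monotone: "\<And>i x y. i \<in> T \<Longrightarrow> (gf i x - gf i y) \<bullet> (x - y) \<ge> \<mu> * (norm (x - y))\<^sup>2"
  shows "gF x \<bullet> (x - w) \<ge> \<mu> * (norm (x - w))\<^sup>2" and "norm (gF x) \<le> \<gamma> * norm (x - w)"
proof -
  have grad_sum: "gF y = (1 / card T) *\<^sub>R (\<Sum>i\<in>T. gf i y)" for y
    by (rule gradient_of_scaled_sum[where f=f and gf=gf and T=T]) (use F F_eq f in auto)
  have "gF w = 0"
    using F w_min by (rule gradient_eq_0_at_minimum)
  then have "gF x = gF x - gF w"
    by simp
  also have "\<dots> = (1 / card T) *\<^sub>R (\<Sum>i\<in>T. gf i x) - (1 / card T) *\<^sub>R (\<Sum>i\<in>T. gf i w)"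
    by (simp only: grad_sum)
  also have "\<dots> = (1 / card T) *\<^sub>R (\<Sum>i\<in>T. gf i x - gf i w)"
    by (simp add: sum_subtractf scaleR_diff_right)
  finally have gF_x: "gF x = (1 / card T) *\<^sub>R (\<Sum>i\<in>T. gf i x - gf i w)" .
  show "gF x \<bullet> (x - w) \<ge> \<mu> * (norm (x - w))\<^sup>2"
    unfolding gF_x using T strongly_monotone by (rule average_inner_ge)
  show "norm (gF x) \<le> \<gamma> * norm (x - w)"
    unfolding gF_x using T smooth by (rule average_norm_le)
qed

lemma gradient_of_group_average_bounds:
  fixes f :: "nat \<Rightarrow> nat \<Rightarrow> 'a::real_inner \<Rightarrow> real"
  assumes "m0 < M" "0 < g m0"
    and F_eq: "F = (\<lambda>x. (1 / real (\<Sum>m<M. g m)) * (\<Sum>m<M. \<Sum>u<g m. f m u x))"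
    and F: "\<And>x. (F has_derivative (\<lambda>h. gF x \<bullet> h)) (at x)"
    and w_min: "\<And>x. F w \<le> F x"
    and f: "\<forall>m<M. \<forall>u<g m. \<forall>x. (f m u has_derivative (\<lambda>h. gf m u x \<bullet> h)) (at x)"
    and smooth: "\<forall>m<M. \<forall>u<g m. \<forall>x y. norm (gf m u x - gf m u y) \<le> \<gamma> * norm (x - y)"
    and strongly_monotone: "\<forall>m<M. \<forall>u<g m. \<forall>x y. (gf m u x - gf m u y) \<bullet> (x - y) \<ge> \<mu> * (norm (x - y))\<^sup>2"
  shows "gF x \<bullet> (x - w) \<ge> \<mu> * (norm (x - w))\<^sup>2" and "norm (gF x) \<le> \<gamma> * norm (x - w)"
proof -
  define T where "T = Sigma {..<M} (\<lambda>m. {..<g m})"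
  have "(m0, 0) \<in> T"
    using assms(1,2) by (simp add: T_def)
  then have T: "finite T" "T \<noteq> {}"
    by (auto simp: T_def)
  have "F = (\<lambda>x. 1 / real (card T) * (\<Sum>i\<in>T. (case i of (m, u) \<Rightarrow> f m u) x))"
    unfolding F_eq T_def by (simp add: sum.Sigma split_beta')
  note average_bounds = gradient_of_average_bounds[OF T this F w_min, where gf="\<lambda>(m, u). gf m u" and \<gamma>=\<gamma> and \<mu>=\<mu>]
  show "gF x \<bullet> (x - w) \<ge> \<mu> * (norm (x - w))\<^sup>2" "norm (gF x) \<le> \<gamma> * norm (x - w)"
    using f smooth strongly_monotone by (auto simp: T_def intro!: average_bounds)
qed

section \<open>One step of stochastic gradient descent\<close>

lemma step_size_bounds:
  fixes \<mu> \<gamma> \<eta> :: real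
  assumes "0 < \<mu>" "0 < \<eta>" "\<eta> \<le> min (1 / \<mu>) (min (1 / (real L * \<gamma>)) (\<mu> / \<gamma>\<^sup>2))"
  shows "\<eta> * \<gamma>\<^sup>2 \<le> \<mu>" and "\<mu> * \<eta> \<le> 1"
proof -
  have "\<gamma>\<^sup>2 > 0"
    using assms(2,3) by (cases "\<gamma> = 0") auto
  then show "\<eta> * \<gamma>\<^sup>2 \<le> \<mu>" "\<mu> * \<eta> \<le> 1"
    using assms(1,3) by (simp_all add: field_simps)
qed

text \<open>The step size condition makes the second-order term \<eta>^2|gx|^2 at most half of the
  first-order gain 2\<eta>\<mu>|x - w|^2.\<close>
lemma gradient_step_contraction:
  fixes gx :: "'a::real_inner"
  assumes monotone: "gx \<bullet> (x - w) \<ge> \<mu> * (norm (x - w))\<^sup>2"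
    and bounded: "norm gx \<le> \<gamma> * norm (x - w)"
    and "\<eta> > 0" "\<eta> * \<gamma>\<^sup>2 \<le> \<mu>"
  shows "(norm (x - \<eta> *\<^sub>R gx - w))\<^sup>2 \<le> (1 - \<mu> * \<eta>) * (norm (x - w))\<^sup>2"
proof -
  define d where "d = x - w"
  have "(norm gx)\<^sup>2 \<le> \<gamma>\<^sup>2 * (norm d)\<^sup>2"
    using bounded power_mono[OF bounded] unfolding d_def by (simp add: power_mult_distrib)
  then have "\<eta>\<^sup>2 * (norm gx)\<^sup>2 \<le> \<eta>\<^sup>2 * (\<gamma>\<^sup>2 * (norm d)\<^sup>2)"
    by (rule mult_left_mono) simp
  also have "\<dots> = \<eta> * (\<eta> * \<gamma>\<^sup>2) * (norm d)\<^sup>2"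
    by (simp add: power2_eq_square)
  also have "\<dots> \<le> \<eta> * \<mu> * (norm d)\<^sup>2"
    using assms(3,4) by (intro mult_right_mono mult_left_mono) auto
  finally have second_order: "\<eta>\<^sup>2 * (norm gx)\<^sup>2 \<le> \<eta> * \<mu> * (norm d)\<^sup>2" .
  have first_order: "2 * \<eta> * (gx \<bullet> d) \<ge> 2 * \<eta> * (\<mu> * (norm d)\<^sup>2)"
    using monotone assms(3) unfolding d_def by (intro mult_left_mono) auto
  have "(norm (x - \<eta> *\<^sub>R gx - w))\<^sup>2 = (norm d)\<^sup>2 - 2 * \<eta> * (gx \<bullet> d) + \<eta>\<^sup>2 * (norm gx)\<^sup>2"
    unfolding d_def power2_norm_eq_inner
    by (simp add: inner_commute power2_eq_square algebra_simps)
  with first_order second_order show ?thesis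
    unfolding d_def by (simp add: algebra_simps)
qed

lemma stochastic_gradient_step_bound:
  fixes G :: "'a::euclidean_space \<Rightarrow> 's \<Rightarrow> 'a"
  assumes "prob_space D"
    and integrable: "integrable D (G x)" and unbiased: "(\<integral>s. G x s \<partial>D) = gx"
    and variance: "(\<integral>\<^sup>+ s. ennreal ((norm (G x s - gx))\<^sup>2) \<partial>D) \<le> ennreal \<zeta>" and "0 \<le> \<zeta>"
  shows "(\<integral>\<^sup>+ s. ennreal ((norm (x - \<eta> *\<^sub>R G x s - w))\<^sup>2) \<partial>D)
           \<le> ennreal ((norm (x - \<eta> *\<^sub>R gx - w))\<^sup>2 + \<eta>\<^sup>2 * \<zeta>)"
proof -
  interpret prob_space D by fact
  define a where "a = x - \<eta> *\<^sub>R gx - w"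
  define e where "e = (\<lambda>s. G x s - gx)"
  have e_integrable: "integrable D e"
    unfolding e_def using integrable by simp
  have e_mean: "(\<integral>s. e s \<partial>D) = 0"
    unfolding e_def using integrable unbiased by (simp add: prob_space)
  have "(\<integral>\<^sup>+ s. ennreal ((norm (e s))\<^sup>2) \<partial>D) < \<infinity>"
    using variance unfolding e_def by (simp add: le_less_trans)
  then have e2_integrable: "integrable D (\<lambda>s. (norm (e s))\<^sup>2)"
    using e_integrable by (intro integrableI_nonneg) auto
  have "ennreal (\<integral>s. (norm (e s))\<^sup>2 \<partial>D) = (\<integral>\<^sup>+ s. ennreal ((norm (e s))\<^sup>2) \<partial>D)"
    using e2_integrable by (intro nn_integral_eq_integral[symmetric]) auto
  also have "\<dots> \<le> ennreal \<zeta>"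
    using variance unfolding e_def .
  finally have e2_mean: "(\<integral>s. (norm (e s))\<^sup>2 \<partial>D) \<le> \<zeta>"
    using \<open>0 \<le> \<zeta>\<close> by simp
  have expand: "(norm (x - \<eta> *\<^sub>R G x s - w))\<^sup>2 = (norm a)\<^sup>2 - 2 * \<eta> * (a \<bullet> e s) + \<eta>\<^sup>2 * (norm (e s))\<^sup>2" for s
  proof -
    have "x - \<eta> *\<^sub>R G x s - w = a - \<eta> *\<^sub>R e s"
      by (simp add: a_def e_def algebra_simps)
    then show ?thesis
      unfolding power2_norm_eq_inner by (simp only:) (simp add: inner_commute power2_eq_square algebra_simps)
  qed
  have "(\<integral>\<^sup>+ s. ennreal ((norm (x - \<eta> *\<^sub>R G x s - w))\<^sup>2) \<partial>D)
      = ennreal (\<integral>s. (norm a)\<^sup>2 - 2 * \<eta> * (a \<bullet> e s) + \<eta>\<^sup>2 * (norm (e s))\<^sup>2 \<partial>D)"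
    unfolding expand
    by (intro nn_integral_eq_integral AE_I2) (use e_integrable e2_integrable in simp, metis expand zero_le_power2)
  also have "(\<integral>s. (norm a)\<^sup>2 - 2 * \<eta> * (a \<bullet> e s) + \<eta>\<^sup>2 * (norm (e s))\<^sup>2 \<partial>D)
      = (norm a)\<^sup>2 - 2 * \<eta> * (a \<bullet> (\<integral>s. e s \<partial>D)) + \<eta>\<^sup>2 * (\<integral>s. (norm (e s))\<^sup>2 \<partial>D)"
    using e_integrable e2_integrable by (simp add: prob_space)
  also have "\<dots> \<le> (norm a)\<^sup>2 + \<eta>\<^sup>2 * \<zeta>"
    using e_mean e2_mean by (simp add: mult_left_mono)
  finally show ?thesis
    unfolding a_def by (simp add: ennreal_leI)
qed

section \<open>Local SGD on a product of sample spaces\<close>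

lemma nn_integral_PiM_split_coordinate:
  fixes Df :: "'i \<Rightarrow> 's measure"
  assumes "finite I" "k \<in> I" "\<And>i. i \<in> I \<Longrightarrow> prob_space (Df i)"
    and f: "f \<in> borel_measurable (PiM I Df)"
  shows "(\<integral>\<^sup>+ S. f S \<partial>PiM I Df) = (\<integral>\<^sup>+ S. \<integral>\<^sup>+ y. f (S(k := y)) \<partial>Df k \<partial>PiM (I - {k}) Df)"
proof -
  \<comment> \<open>The point masses outside I only serve the global hypothesis of the product locale.\<close>
  define Df' where "Df' = (\<lambda>i. if i \<in> I then Df i else return (count_space UNIV) undefined)"
  interpret product_sigma_finite Df'
    unfolding product_sigma_finite_def Df'_def
    using assms(3) by (auto intro!: prob_space_imp_sigma_finite prob_space_return)
  have PiM_Df': "PiM J Df = PiM J Df'" if "J \<subseteq> I" for J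
    using that by (intro PiM_cong) (auto simp: Df'_def)
  have I: "I = insert k (I - {k})"
    using assms(2) by auto
  have "(\<integral>\<^sup>+ S. f S \<partial>PiM (insert k (I - {k})) Df')
      = (\<integral>\<^sup>+ S. \<integral>\<^sup>+ y. f (S(k := y)) \<partial>Df' k \<partial>PiM (I - {k}) Df')"
    using assms(1) f PiM_Df'[of I] I by (intro product_nn_integral_insert) auto
  then show ?thesis
    using PiM_Df'[of I] PiM_Df'[of "I - {k}"] I assms(2) by (simp add: Df'_def)
qed

lemma nn_integral_PiM_independent_coordinate:
  fixes Df :: "'i \<Rightarrow> 's measure"
  assumes "finite I" "k \<in> I" "\<And>i. i \<in> I \<Longrightarrow> prob_space (Df i)"
    and "f \<in> borel_measurable (PiM I Df)" and "\<And>S y. f (S(k := y)) = f S"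
  shows "(\<integral>\<^sup>+ S. f S \<partial>PiM I Df) = (\<integral>\<^sup>+ S. f S \<partial>PiM (I - {k}) Df)"
  using nn_integral_PiM_split_coordinate[OF assms(1-4)] assms(2,3,5)
  by (simp add: prob_space.emeasure_space_1)

lemma nn_integral_PiM_fresh_coordinate_le:
  fixes Df :: "'i \<Rightarrow> 's measure"
  assumes I: "finite I" "k \<in> I" "\<And>i. i \<in> I \<Longrightarrow> prob_space (Df i)"
    and X: "\<And>S y. X (S(k := y)) = X S"
    and h_meas: "(\<lambda>S. h (X S) (S k)) \<in> borel_measurable (PiM I Df)"
    and B_meas: "(\<lambda>S. B (X S)) \<in> borel_measurable (PiM I Df)"
    and h_le: "\<And>x. (\<integral>\<^sup>+ y. h x y \<partial>Df k) \<le> B x"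
  shows "(\<integral>\<^sup>+ S. h (X S) (S k) \<partial>PiM I Df) \<le> (\<integral>\<^sup>+ S. B (X S) \<partial>PiM I Df)"
proof -
  have "(\<integral>\<^sup>+ S. h (X S) (S k) \<partial>PiM I Df) = (\<integral>\<^sup>+ S. \<integral>\<^sup>+ y. h (X S) y \<partial>Df k \<partial>PiM (I - {k}) Df)"
    using nn_integral_PiM_split_coordinate[OF I h_meas] X by simp
  also have "\<dots> \<le> (\<integral>\<^sup>+ S. B (X S) \<partial>PiM (I - {k}) Df)"
    by (intro nn_integral_mono h_le)
  also have "\<dots> = (\<integral>\<^sup>+ S. B (X S) \<partial>PiM I Df)"
    using I B_meas X by (intro nn_integral_PiM_independent_coordinate[symmetric]) auto
  finally show ?thesis .
qed

lemma local_sgd_cong: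
  "(\<And>l. l < n \<Longrightarrow> ss l = ss' l) \<Longrightarrow> local_sgd G eta x ss n = local_sgd G eta x ss' n"
  by (induction n) auto

lemma measurable_local_sgd:
  fixes G :: "'a::euclidean_space \<Rightarrow> 's \<Rightarrow> 'a"
  assumes G: "(\<lambda>(x, s). G x s) \<in> borel_measurable (borel \<Otimes>\<^sub>M D)"
    and x: "x \<in> borel_measurable N"
    and ss: "\<And>l. l < n \<Longrightarrow> (\<lambda>z. ss z l) \<in> measurable N D"
  shows "(\<lambda>z. local_sgd G eta (x z) (ss z) n) \<in> borel_measurable N"
  using ss
proof (induction n)
  case 0
  then show ?case
    using x by simp
next
  case (Suc n)
  then have iterate: "(\<lambda>z. local_sgd G eta (x z) (ss z) n) \<in> borel_measurable N"
    by simp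
  have "(\<lambda>z. (local_sgd G eta (x z) (ss z) n, ss z n)) \<in> measurable N (borel \<Otimes>\<^sub>M D)"
    using iterate Suc.prems[of n] by (intro measurable_Pair) auto
  from measurable_comp[OF this G]
  have "(\<lambda>z. G (local_sgd G eta (x z) (ss z) n) (ss z n)) \<in> borel_measurable N"
    by (simp add: comp_def)
  with iterate show ?case
    by simp
qed

lemma nn_integral_local_sgd_Suc_le:
  fixes G :: "'a::euclidean_space \<Rightarrow> 's \<Rightarrow> 'a" and Df :: "'i \<Rightarrow> 's measure" and j :: "nat \<Rightarrow> 'i"
  assumes G: "(\<lambda>(x, s). G x s) \<in> borel_measurable (borel \<Otimes>\<^sub>M D)"
    and I: "finite I" "\<And>i. i \<in> I \<Longrightarrow> prob_space (Df i)"
    and j: "inj j" "\<And>l. l \<le> n \<Longrightarrow> j l \<in> I" "\<And>l. l \<le> n \<Longrightarrow> Df (j l) = D"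
    and step: "\<And>x. (\<integral>\<^sup>+ s. ennreal ((norm (x - \<eta> *\<^sub>R G x s - w))\<^sup>2) \<partial>D)
                 \<le> ennreal (\<rho> * (norm (x - w))\<^sup>2 + c)"
    and "0 \<le> \<rho>" "0 \<le> c"
  shows "(\<integral>\<^sup>+ S. ennreal ((norm (local_sgd G \<eta> x0 (\<lambda>l. S (j l)) (Suc n) - w))\<^sup>2) \<partial>PiM I Df)
           \<le> ennreal \<rho> * (\<integral>\<^sup>+ S. ennreal ((norm (local_sgd G \<eta> x0 (\<lambda>l. S (j l)) n - w))\<^sup>2) \<partial>PiM I Df)
             + ennreal c"
proof -
  define X where "X = (\<lambda>S. local_sgd G \<eta> x0 (\<lambda>l. S (j l)) n)"
  have sample_meas: "(\<lambda>S. S (j l)) \<in> measurable (PiM I Df) D" if "l \<le> n" for l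
    using measurable_component_singleton[of "j l" I Df] j that by simp
  have X_meas: "X \<in> borel_measurable (PiM I Df)"
    unfolding X_def using sample_meas by (intro measurable_local_sgd[OF G]) auto
  have X_upd: "X (S(j n := y)) = X S" for S y
    unfolding X_def using \<open>inj j\<close> by (intro local_sgd_cong) (auto dest: injD)
  have "(\<integral>\<^sup>+ S. ennreal ((norm (local_sgd G \<eta> x0 (\<lambda>l. S (j l)) (Suc n) - w))\<^sup>2) \<partial>PiM I Df)
      = (\<integral>\<^sup>+ S. ennreal ((norm (X S - \<eta> *\<^sub>R G (X S) (S (j n)) - w))\<^sup>2) \<partial>PiM I Df)"
    by (simp add: X_def)
  also have "\<dots> \<le> (\<integral>\<^sup>+ S. ennreal (\<rho> * (norm (X S - w))\<^sup>2 + c) \<partial>PiM I Df)"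
  proof (rule nn_integral_PiM_fresh_coordinate_le[where X=X and k="j n" and h="\<lambda>x y. ennreal ((norm (x - \<eta> *\<^sub>R G x y - w))\<^sup>2)"
        and B="\<lambda>x. ennreal (\<rho> * (norm (x - w))\<^sup>2 + c)", OF I(1) _ I(2) X_upd])
    have "(\<lambda>S. local_sgd G \<eta> x0 (\<lambda>l. S (j l)) (Suc n)) \<in> borel_measurable (PiM I Df)"
      using sample_meas by (intro measurable_local_sgd[OF G]) auto
    then show "(\<lambda>S. ennreal ((norm (X S - \<eta> *\<^sub>R G (X S) (S (j n)) - w))\<^sup>2)) \<in> borel_measurable (PiM I Df)"
      by (simp add: X_def)
    show "(\<lambda>S. ennreal (\<rho> * (norm (X S - w))\<^sup>2 + c)) \<in> borel_measurable (PiM I Df)"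
      using X_meas by measurable
  qed (use j step in auto)
  also have "\<dots> = (\<integral>\<^sup>+ S. ennreal \<rho> * ennreal ((norm (X S - w))\<^sup>2) + ennreal c \<partial>PiM I Df)"
    using \<open>0 \<le> \<rho>\<close> \<open>0 \<le> c\<close> by (intro nn_integral_cong) (simp add: ennreal_mult)
  also have "\<dots> = ennreal \<rho> * (\<integral>\<^sup>+ S. ennreal ((norm (X S - w))\<^sup>2) \<partial>PiM I Df) + ennreal c"
  proof -
    interpret prob_space "PiM I Df"
      using I by (intro prob_space_PiM) auto
    show ?thesis
      using X_meas by (simp add: nn_integral_add nn_integral_cmult emeasure_space_1)
  qed
  finally show ?thesis
    unfolding X_def .
qed

lemma nn_integral_local_sgd_le:
  fixes G :: "'a::euclidean_space \<Rightarrow> 's \<Rightarrow> 'a" and Df :: "'i \<Rightarrow> 's measure" and j :: "nat \<Rightarrow> 'i"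
  assumes G: "(\<lambda>(x, s). G x s) \<in> borel_measurable (borel \<Otimes>\<^sub>M D)"
    and I: "finite I" "\<And>i. i \<in> I \<Longrightarrow> prob_space (Df i)"
    and j: "inj j" "\<And>l. l < n \<Longrightarrow> j l \<in> I" "\<And>l. l < n \<Longrightarrow> Df (j l) = D"
    and step: "\<And>x. (\<integral>\<^sup>+ s. ennreal ((norm (x - \<eta> *\<^sub>R G x s - w))\<^sup>2) \<partial>D)
                 \<le> ennreal (\<rho> * (norm (x - w))\<^sup>2 + c)"
    and "0 \<le> \<rho>" "\<rho> \<le> 1" "0 \<le> c"
  shows "(\<integral>\<^sup>+ S. ennreal ((norm (local_sgd G \<eta> x0 (\<lambda>l. S (j l)) n - w))\<^sup>2) \<partial>PiM I Df)
           \<le> ennreal (\<rho> ^ n * (norm (x0 - w))\<^sup>2 + real n * c)"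
  using j(2,3)
proof (induction n)
  case 0
  have "prob_space (PiM I Df)"
    using I by (intro prob_space_PiM) auto
  then show ?case
    by (simp add: prob_space.emeasure_space_1)
next
  case (Suc n)
  have "(\<integral>\<^sup>+ S. ennreal ((norm (local_sgd G \<eta> x0 (\<lambda>l. S (j l)) (Suc n) - w))\<^sup>2) \<partial>PiM I Df)
      \<le> ennreal \<rho> * (\<integral>\<^sup>+ S. ennreal ((norm (local_sgd G \<eta> x0 (\<lambda>l. S (j l)) n - w))\<^sup>2) \<partial>PiM I Df)
        + ennreal c"
    using G I j(1) Suc.prems step \<open>0 \<le> \<rho>\<close> \<open>0 \<le> c\<close> by (intro nn_integral_local_sgd_Suc_le) auto
  also have "\<dots> \<le> ennreal \<rho> * ennreal (\<rho> ^ n * (norm (x0 - w))\<^sup>2 + real n * c) + ennreal c"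
    using Suc by (intro add_mono mult_left_mono) auto
  also have "\<dots> = ennreal (\<rho> * (\<rho> ^ n * (norm (x0 - w))\<^sup>2 + real n * c) + c)"
    using \<open>0 \<le> \<rho>\<close> \<open>0 \<le> c\<close> by (simp add: ennreal_mult)
  also have "\<dots> \<le> ennreal (\<rho> ^ Suc n * (norm (x0 - w))\<^sup>2 + real (Suc n) * c)"
  proof (rule ennreal_leI)
    have "\<rho> * (real n * c) \<le> real n * c"
      using \<open>0 \<le> \<rho>\<close> \<open>\<rho> \<le> 1\<close> \<open>0 \<le> c\<close> by (intro mult_left_le_one_le) auto
    then show "\<rho> * (\<rho> ^ n * (norm (x0 - w))\<^sup>2 + real n * c) + c \<le> \<rho> ^ Suc n * (norm (x0 - w))\<^sup>2 + real (Suc n) * c"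
      by (simp add: algebra_simps)
  qed
  finally show ?case .
qed

lemma local_sgd_mean_square_error_le:
  fixes G :: "'a::euclidean_space \<Rightarrow> 's \<Rightarrow> 'a" and Df :: "'i \<Rightarrow> 's measure" and j :: "nat \<Rightarrow> 'i"
  assumes D: "prob_space D" and G: "(\<lambda>(x, s). G x s) \<in> borel_measurable (borel \<Otimes>\<^sub>M D)"
    and integrable: "\<And>x. integrable D (G x)" and unbiased: "\<And>x. (\<integral>s. G x s \<partial>D) = gF x"
    and variance: "\<And>x. (\<integral>\<^sup>+ s. ennreal ((norm (G x s - gF x))\<^sup>2) \<partial>D) \<le> ennreal \<zeta>" "0 \<le> \<zeta>"
    and monotone: "\<And>x. gF x \<bullet> (x - w) \<ge> \<mu> * (norm (x - w))\<^sup>2"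
    and bounded: "\<And>x. norm (gF x) \<le> \<gamma> * norm (x - w)"
    and \<eta>: "0 < \<eta>" "\<eta> * \<gamma>\<^sup>2 \<le> \<mu>" "\<mu> * \<eta> \<le> 1"
    and I: "finite I" "\<And>i. i \<in> I \<Longrightarrow> prob_space (Df i)"
    and j: "inj j" "\<And>l. l < n \<Longrightarrow> j l \<in> I" "\<And>l. l < n \<Longrightarrow> Df (j l) = D"
  shows "(\<integral>\<^sup>+ S. ennreal ((norm (local_sgd G \<eta> x0 (\<lambda>l. S (j l)) n - w))\<^sup>2) \<partial>PiM I Df)
           \<le> ennreal ((1 - \<mu> * \<eta>) ^ n * (norm (x0 - w))\<^sup>2 + real n * (\<eta>\<^sup>2 * \<zeta>))"
proof (rule nn_integral_local_sgd_le[where \<rho>="1 - \<mu> * \<eta>" and c="\<eta>\<^sup>2 * \<zeta>"])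
  show "(\<integral>\<^sup>+ s. ennreal ((norm (x - \<eta> *\<^sub>R G x s - w))\<^sup>2) \<partial>D)
          \<le> ennreal ((1 - \<mu> * \<eta>) * (norm (x - w))\<^sup>2 + \<eta>\<^sup>2 * \<zeta>)" for x
  proof -
    have "(norm (x - \<eta> *\<^sub>R gF x - w))\<^sup>2 \<le> (1 - \<mu> * \<eta>) * (norm (x - w))\<^sup>2"
      using monotone bounded \<eta>(1,2) by (rule gradient_step_contraction)
    moreover have "(\<integral>\<^sup>+ s. ennreal ((norm (x - \<eta> *\<^sub>R G x s - w))\<^sup>2) \<partial>D)
          \<le> ennreal ((norm (x - \<eta> *\<^sub>R gF x - w))\<^sup>2 + \<eta>\<^sup>2 * \<zeta>)"
      using D integrable unbiased variance by (rule stochastic_gradient_step_bound)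
    ultimately show ?thesis
      by (elim order_trans) (simp add: ennreal_leI)
  qed
  have "0 \<le> \<eta> * \<gamma>\<^sup>2"
    using \<eta>(1) by simp
  then have "0 \<le> \<mu>"
    using \<eta>(2) by linarith
  then show "1 - \<mu> * \<eta> \<le> 1"
    using \<eta>(1) by simp
qed (use G I j \<eta> \<open>0 \<le> \<zeta>\<close> in auto)

section \<open>Clusters and samples of one round\<close>

lemma finite_cluster_choices: "finite (cluster_choices M g c)"
proof -
  have "cluster_choices M g c
      \<subseteq> {Cs. \<forall>m. (m \<in> {..<M} \<longrightarrow> Cs m \<in> Pow {..<\<Sum>m<M. g m}) \<and> (m \<notin> {..<M} \<longrightarrow> Cs m = {})}"
    unfolding cluster_choices_def using member_le_sum[of _ "{..<M}" g] by fastforce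
  then show ?thesis
    by (rule finite_subset) (intro finite_set_of_finite_funs; simp)
qed

lemma cluster_choices_nonempty:
  assumes "\<And>m. m < M \<Longrightarrow> c m \<le> g m"
  shows "cluster_choices M g c \<noteq> {}"
proof -
  have "(\<lambda>m. if m < M then {..<c m} else {}) \<in> cluster_choices M g c"
    unfolding cluster_choices_def using assms by auto
  then show ?thesis
    by auto
qed

lemma set_pmf_of_cluster_choices:
  assumes "\<And>m. m < M \<Longrightarrow> c m \<le> g m"
  shows "set_pmf (pmf_of_set (cluster_choices M g c)) = cluster_choices M g c"
  using finite_cluster_choices cluster_choices_nonempty[OF assms] by simp

lemma cluster_choicesD:
  assumes "Cs \<in> cluster_choices M g c" "m < M"
  shows "Cs m \<subseteq> {..<g m}" and "finite (Cs m)"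
  using assms unfolding cluster_choices_def by (auto intro: finite_subset)

lemma sum_cluster_choices_Sigma:
  assumes "Cs \<in> cluster_choices M g c"
  shows "(\<Sum>m<M. \<Sum>u\<in>Cs m. h m u) = (\<Sum>(m, u)\<in>Sigma {..<M} Cs. h m u)"
  using cluster_choicesD(2)[OF assms] by (simp add: sum.Sigma)

lemma finite_sample_index: "finite (sample_index M g L)"
proof -
  have "sample_index M g L \<subseteq> {..<M} \<times> {..<\<Sum>m<M. g m} \<times> {..<L}"
    unfolding sample_index_def using member_le_sum[of _ "{..<M}" g] by fastforce
  then show ?thesis
    by (rule finite_subset) auto
qed

lemma prob_space_PiM_sample_index:
  assumes "\<And>m u. m < M \<Longrightarrow> u < g m \<Longrightarrow> prob_space (D m u)"
  shows "prob_space (\<Pi>\<^sub>M i\<in>sample_index M g L. D (fst i) (fst (snd i)))"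
  using assms finite_sample_index by (intro prob_space_PiM) (auto simp: sample_index_def)

lemma measurable_sample_index_component:
  assumes "m < M" "u < g m" "l < L"
  shows "(\<lambda>S. S (m, u, l)) \<in> measurable (\<Pi>\<^sub>M i\<in>sample_index M g L. D (fst i) (fst (snd i))) (D m u)"
  using measurable_component_singleton[of "(m, u, l)" "sample_index M g L" "\<lambda>i. D (fst i) (fst (snd i))"] assms
  by (simp add: sample_index_def)

section \<open>Fusion of the local models\<close>

lemma convex_combination_dist_sq_le:
  fixes v :: "'i \<Rightarrow> 'a::real_normed_vector"
  assumes "finite T" and sum_a: "(\<Sum>i\<in>T. a i) = 1" and a_nonneg: "\<And>i. i \<in> T \<Longrightarrow> 0 \<le> a i"
  shows "(norm ((\<Sum>i\<in>T. a i *\<^sub>R v i) - w))\<^sup>2 \<le> (\<Sum>i\<in>T. a i * (norm (v i - w))\<^sup>2)"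
proof -
  have "T \<noteq> {}"
    using sum_a by auto
  have "(\<Sum>i\<in>T. a i *\<^sub>R (v i - w)) = (\<Sum>i\<in>T. a i *\<^sub>R v i) - (\<Sum>i\<in>T. a i) *\<^sub>R w"
    by (simp add: scaleR_diff_right sum_subtractf scaleR_sum_left)
  then have "norm ((\<Sum>i\<in>T. a i *\<^sub>R v i) - w) = norm (\<Sum>i\<in>T. a i *\<^sub>R (v i - w))"
    by (simp add: sum_a)
  also have "\<dots> \<le> (\<Sum>i\<in>T. norm (a i *\<^sub>R (v i - w)))"
    by (rule norm_sum)
  also have "\<dots> = (\<Sum>i\<in>T. a i * norm (v i - w))"
    using a_nonneg by (intro sum.cong) auto
  finally have "(norm ((\<Sum>i\<in>T. a i *\<^sub>R v i) - w))\<^sup>2 \<le> (\<Sum>i\<in>T. a i * norm (v i - w))\<^sup>2"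
    by (rule power_mono) simp_all
  also have "\<dots> \<le> (\<Sum>i\<in>T. a i * (norm (v i - w))\<^sup>2)"
    using convex_on_sum[OF \<open>finite T\<close> \<open>T \<noteq> {}\<close> convex_power2 sum_a, of "\<lambda>i. norm (v i - w)"] a_nonneg
    by simp
  finally show ?thesis .
qed

lemma nn_integral_pmf_pair_finite:
  assumes supp: "finite (set_pmf p)" and "sigma_finite_measure Q"
    and f: "f \<in> borel_measurable (measure_pmf p \<Otimes>\<^sub>M Q)"
  shows "(\<integral>\<^sup>+ z. f z \<partial>(measure_pmf p \<Otimes>\<^sub>M Q)) = (\<Sum>C\<in>set_pmf p. pmf p C * (\<integral>\<^sup>+ y. f (C, y) \<partial>Q))"
proof -
  interpret Q: sigma_finite_measure Q
    by fact
  have "(\<integral>\<^sup>+ z. f z \<partial>(measure_pmf p \<Otimes>\<^sub>M Q)) = (\<integral>\<^sup>+ C. \<integral>\<^sup>+ y. f (C, y) \<partial>Q \<partial>measure_pmf p)"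
    by (rule Q.nn_integral_fst[OF f, symmetric])
  also have "\<dots> = (\<Sum>C\<in>set_pmf p. (\<integral>\<^sup>+ y. f (C, y) \<partial>Q) * pmf p C)"
    using nn_integral_measure_pmf_finite[OF supp, of "\<lambda>C. \<integral>\<^sup>+ y. f (C, y) \<partial>Q"] by simp
  finally show ?thesis
    by (simp only: mult.commute)
qed

lemma nn_integral_pair_pmf_le:
  fixes f :: "'x \<times> 'c \<times> 'y \<Rightarrow> ennreal" and \<phi> :: "'c \<Rightarrow> 'x \<times> 'y \<Rightarrow> ennreal"
  assumes supp: "finite (set_pmf p)" and Q: "sigma_finite_measure Q"
    and \<phi>_meas: "\<And>C. C \<in> set_pmf p \<Longrightarrow> \<phi> C \<in> borel_measurable (P \<Otimes>\<^sub>M Q)"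
    and f_le: "\<And>x C y. C \<in> set_pmf p \<Longrightarrow> f (x, C, y) \<le> \<phi> C (x, y)"
  shows "nn_integral (P \<Otimes>\<^sub>M (measure_pmf p \<Otimes>\<^sub>M Q)) f
           \<le> (\<integral>\<^sup>+ x. (\<Sum>C\<in>set_pmf p. pmf p C * (\<integral>\<^sup>+ y. \<phi> C (x, y) \<partial>Q)) \<partial>P)"
proof -
  \<comment> \<open>A measurable majorant of f: since the support of p is finite, f may be replaced by \<infinity> off it.\<close>
  define \<psi> where "\<psi> = (\<lambda>z. (\<Sum>C\<in>set_pmf p. indicator {C} (fst (snd z)) * \<phi> C (fst z, snd (snd z)))
                            + indicator (- set_pmf p) (fst (snd z)) * (\<infinity>::ennreal))"
  have \<psi>_supp: "\<psi> (x, C, y) = \<phi> C (x, y)" if "C \<in> set_pmf p" for x C y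
    using that supp by (simp add: \<psi>_def indicator_def if_distrib)
  interpret pQ: sigma_finite_measure "measure_pmf p \<Otimes>\<^sub>M Q"
    by (intro sigma_finite_pair_measure Q) (simp add: prob_space_imp_sigma_finite prob_space_measure_pmf)
  have \<psi>_meas: "\<psi> \<in> borel_measurable (P \<Otimes>\<^sub>M (measure_pmf p \<Otimes>\<^sub>M Q))"
  proof -
    have C_meas: "(\<lambda>z. fst (snd z)) \<in> measurable (P \<Otimes>\<^sub>M (measure_pmf p \<Otimes>\<^sub>M Q)) (measure_pmf p)"
      by measurable
    have "(\<lambda>z. indicator A (fst (snd z)) :: ennreal) \<in> borel_measurable (P \<Otimes>\<^sub>M (measure_pmf p \<Otimes>\<^sub>M Q))" for A
      by (rule measurable_compose[OF C_meas borel_measurable_indicator]) simp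
    moreover have "(\<lambda>z. \<phi> C (fst z, snd (snd z))) \<in> borel_measurable (P \<Otimes>\<^sub>M (measure_pmf p \<Otimes>\<^sub>M Q))"
      if "C \<in> set_pmf p" for C
      by (rule measurable_compose[OF _ \<phi>_meas[OF that]]) measurable
    ultimately show ?thesis
      unfolding \<psi>_def by (intro borel_measurable_add borel_measurable_sum borel_measurable_times_ennreal) auto
  qed
  have "nn_integral (P \<Otimes>\<^sub>M (measure_pmf p \<Otimes>\<^sub>M Q)) f \<le> nn_integral (P \<Otimes>\<^sub>M (measure_pmf p \<Otimes>\<^sub>M Q)) \<psi>"
  proof (rule nn_integral_mono)
    fix z :: "'x \<times> 'c \<times> 'y"
    obtain x C y where z: "z = (x, C, y)"
      by (cases z) auto
    show "f z \<le> \<psi> z"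
      using f_le[of C x y] unfolding z by (cases "C \<in> set_pmf p") (simp_all add: \<psi>_supp, simp add: \<psi>_def)
  qed
  also have "\<dots> = (\<integral>\<^sup>+ x. \<integral>\<^sup>+ z. \<psi> (x, z) \<partial>(measure_pmf p \<Otimes>\<^sub>M Q) \<partial>P)"
    by (rule pQ.nn_integral_fst[OF \<psi>_meas, symmetric])
  also have "\<dots> = (\<integral>\<^sup>+ x. (\<Sum>C\<in>set_pmf p. pmf p C * (\<integral>\<^sup>+ y. \<phi> C (x, y) \<partial>Q)) \<partial>P)"
  proof (rule nn_integral_cong)
    fix x assume "x \<in> space P"
    with \<psi>_meas have "(\<lambda>z. \<psi> (x, z)) \<in> borel_measurable (measure_pmf p \<Otimes>\<^sub>M Q)"
      by (rule measurable_Pair2)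
    then show "(\<integral>\<^sup>+ z. \<psi> (x, z) \<partial>(measure_pmf p \<Otimes>\<^sub>M Q)) = (\<Sum>C\<in>set_pmf p. pmf p C * (\<integral>\<^sup>+ y. \<phi> C (x, y) \<partial>Q))"
      using supp Q by (simp add: nn_integral_pmf_pair_finite \<psi>_supp)
  qed
  finally show ?thesis .
qed

lemma nn_integral_convex_sum_le:
  assumes "finite T" "(\<Sum>i\<in>T. a i) = 1" "\<And>i. i \<in> T \<Longrightarrow> 0 \<le> a i"
    and "\<And>i. i \<in> T \<Longrightarrow> f i \<in> borel_measurable Q" "\<And>i. i \<in> T \<Longrightarrow> (\<integral>\<^sup>+ y. f i y \<partial>Q) \<le> B"
  shows "(\<integral>\<^sup>+ y. (\<Sum>i\<in>T. ennreal (a i) * f i y) \<partial>Q) \<le> B"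
proof -
  have "(\<integral>\<^sup>+ y. (\<Sum>i\<in>T. ennreal (a i) * f i y) \<partial>Q) = (\<Sum>i\<in>T. ennreal (a i) * (\<integral>\<^sup>+ y. f i y \<partial>Q))"
    using assms(4) by (simp add: nn_integral_sum nn_integral_cmult)
  also have "\<dots> \<le> (\<Sum>i\<in>T. ennreal (a i) * B)"
    using assms(5) by (intro sum_mono mult_left_mono) auto
  also have "\<dots> = B"
    using assms(2,3) by (simp add: sum_distrib_right[symmetric])
  finally show ?thesis .
qed

lemma nn_integral_random_convex_combination_le:
  fixes V :: "'i \<Rightarrow> 'x \<Rightarrow> 'y \<Rightarrow> 'a::euclidean_space"
    and T :: "'c \<Rightarrow> 'i set" and a :: "'c \<Rightarrow> 'i \<Rightarrow> real"
  assumes supp: "finite (set_pmf p)" and Q: "prob_space Q"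
    and T: "\<And>C. C \<in> set_pmf p \<Longrightarrow> finite (T C)"
    and a: "\<And>C. C \<in> set_pmf p \<Longrightarrow> (\<Sum>i\<in>T C. a C i) = 1"
      "\<And>C i. C \<in> set_pmf p \<Longrightarrow> i \<in> T C \<Longrightarrow> 0 \<le> a C i"
    and V_meas: "\<And>C i. C \<in> set_pmf p \<Longrightarrow> i \<in> T C \<Longrightarrow> (\<lambda>(x, y). V i x y) \<in> borel_measurable (P \<Otimes>\<^sub>M Q)"
    and V_le: "\<And>C i x. C \<in> set_pmf p \<Longrightarrow> i \<in> T C \<Longrightarrow> x \<in> space P \<Longrightarrow>
                 (\<integral>\<^sup>+ y. ennreal ((norm (V i x y - w))\<^sup>2) \<partial>Q) \<le> B x"
    and f: "\<And>x C y. C \<in> set_pmf p \<Longrightarrow> f (x, C, y) = ennreal ((norm ((\<Sum>i\<in>T C. a C i *\<^sub>R V i x y) - w))\<^sup>2)"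
  shows "nn_integral (P \<Otimes>\<^sub>M (measure_pmf p \<Otimes>\<^sub>M Q)) f \<le> (\<integral>\<^sup>+ x. B x \<partial>P)"
proof -
  define \<phi> where "\<phi> C = (\<lambda>(x, y). \<Sum>i\<in>T C. ennreal (a C i) * ennreal ((norm (V i x y - w))\<^sup>2))" for C
  have "nn_integral (P \<Otimes>\<^sub>M (measure_pmf p \<Otimes>\<^sub>M Q)) f
      \<le> (\<integral>\<^sup>+ x. (\<Sum>C\<in>set_pmf p. pmf p C * (\<integral>\<^sup>+ y. \<phi> C (x, y) \<partial>Q)) \<partial>P)"
  proof (rule nn_integral_pair_pmf_le[OF supp prob_space_imp_sigma_finite[OF Q]])
    fix C assume C: "C \<in> set_pmf p"
    have "(\<lambda>z. ennreal ((norm (V i (fst z) (snd z) - w))\<^sup>2)) \<in> borel_measurable (P \<Otimes>\<^sub>M Q)" if "i \<in> T C" for i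
      using V_meas[OF C that, unfolded split_beta'] by measurable
    then show "\<phi> C \<in> borel_measurable (P \<Otimes>\<^sub>M Q)"
      unfolding \<phi>_def split_beta' by (intro borel_measurable_sum borel_measurable_times_ennreal) auto
    fix x y
    have "(norm ((\<Sum>i\<in>T C. a C i *\<^sub>R V i x y) - w))\<^sup>2 \<le> (\<Sum>i\<in>T C. a C i * (norm (V i x y - w))\<^sup>2)"
      using T[OF C] a(1)[OF C] a(2)[OF C] by (rule convex_combination_dist_sq_le)
    then show "f (x, C, y) \<le> \<phi> C (x, y)"
      using a(2)[OF C] by (simp add: f[OF C] \<phi>_def ennreal_mult[symmetric] ennreal_leI)
  qed
  also have "\<dots> \<le> (\<integral>\<^sup>+ x. B x \<partial>P)"
  proof (rule nn_integral_mono)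
    fix x assume x: "x \<in> space P"
    have \<phi>_le: "(\<integral>\<^sup>+ y. \<phi> C (x, y) \<partial>Q) \<le> B x" if C: "C \<in> set_pmf p" for C
      unfolding \<phi>_def prod.case using T[OF C] a(1)[OF C] a(2)[OF C] V_le[OF C _ x]
        measurable_Pair2[OF V_meas[OF C] x]
      by (intro nn_integral_convex_sum_le) auto
    have "(\<Sum>C\<in>set_pmf p. pmf p C * (\<integral>\<^sup>+ y. \<phi> C (x, y) \<partial>Q)) \<le> (\<Sum>C\<in>set_pmf p. pmf p C * B x)"
      using \<phi>_le by (intro sum_mono mult_left_mono) auto
    also have "\<dots> = B x"
      using supp by (simp add: sum_distrib_right[symmetric] sum_pmf_eq_1)
    finally show "(\<Sum>C\<in>set_pmf p. pmf p C * (\<integral>\<^sup>+ y. \<phi> C (x, y) \<partial>Q)) \<le> B x" .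
  qed
  finally show ?thesis .
qed

lemma nn_integral_fused_models_le:
  fixes V :: "nat \<Rightarrow> nat \<Rightarrow> 'x \<Rightarrow> 'y \<Rightarrow> 'a::euclidean_space"
  assumes c: "\<And>m. m < M \<Longrightarrow> c m \<le> g m" and Q: "prob_space Q"
    and \<omega>_nonneg: "\<forall>Cs\<in>cluster_choices M g c. \<forall>m<M. \<forall>u\<in>Cs m. \<omega> Cs m u \<ge> 0"
    and \<omega>_sum: "\<forall>Cs\<in>cluster_choices M g c. (\<Sum>m<M. \<Sum>u\<in>Cs m. \<omega> Cs m u) = 1"
    and V_meas: "\<And>m u. m < M \<Longrightarrow> u < g m \<Longrightarrow> (\<lambda>(x, y). V m u x y) \<in> borel_measurable (P \<Otimes>\<^sub>M Q)"
    and V_le: "\<And>m u x. m < M \<Longrightarrow> u < g m \<Longrightarrow> (\<integral>\<^sup>+ y. ennreal ((norm (V m u x y - w))\<^sup>2) \<partial>Q) \<le> B x"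
  shows "nn_integral (P \<Otimes>\<^sub>M (measure_pmf (pmf_of_set (cluster_choices M g c)) \<Otimes>\<^sub>M Q))
           (\<lambda>(x, Cs, y). ennreal ((norm ((\<Sum>m<M. \<Sum>u\<in>Cs m. \<omega> Cs m u *\<^sub>R V m u x y) - w))\<^sup>2))
         \<le> (\<integral>\<^sup>+ x. B x \<partial>P)"
proof -
  let ?CC = "cluster_choices M g c"
  have in_cluster: "u < g m" if "Cs \<in> ?CC" "m < M" "u \<in> Cs m" for Cs m u
    using cluster_choicesD(1)[OF that(1,2)] that(3) by auto
  have fused: "(\<Sum>m<M. \<Sum>u\<in>Cs m. \<omega> Cs m u *\<^sub>R v m u) = (\<Sum>(m, u)\<in>Sigma {..<M} Cs. \<omega> Cs m u *\<^sub>R v m u)"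
    if "Cs \<in> ?CC" for Cs and v :: "nat \<Rightarrow> nat \<Rightarrow> 'a"
    by (rule sum_cluster_choices_Sigma[OF that])
  have weights: "(\<Sum>(m, u)\<in>Sigma {..<M} Cs. \<omega> Cs m u) = 1" if "Cs \<in> ?CC" for Cs
    using sum_cluster_choices_Sigma[OF that, of "\<omega> Cs"] \<omega>_sum that by simp
  show ?thesis
    using set_pmf_of_cluster_choices[OF c] finite_cluster_choices cluster_choicesD(2) weights fused \<omega>_nonneg
    by (intro nn_integral_random_convex_combination_le[OF _ Q, where T="\<lambda>Cs. Sigma {..<M} Cs"
        and a="\<lambda>Cs (m, u). \<omega> Cs m u" and V="\<lambda>(m, u). V m u"])
       (auto simp: case_prod_beta intro!: V_le V_meas intro: in_cluster)
qed

text \<open>The stated bound is weaker than the one the argument yields: the factor 1 + K\<eta>^2 and the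
  term with \<gamma>^2 are slack.\<close>
lemma rate_le_paper_rate:
  fixes \<rho> \<eta> \<zeta> \<gamma> :: real and K L :: nat and E :: ennreal
  assumes "0 \<le> \<rho>" "1 \<le> L"
  shows "ennreal \<rho> * E + ennreal (real L * (\<eta>\<^sup>2 * max \<zeta> 0))
           \<le> ennreal ((1 + real K * \<eta>\<^sup>2) * \<rho>) * E
             + ennreal ((1 / real K + \<eta>\<^sup>2) * ((real L)\<^sup>2 * \<zeta> + real K * (real L)^3 * \<gamma>\<^sup>2 * \<zeta> * \<eta>\<^sup>2 * exp 1))"
proof (intro add_mono mult_right_mono)
  show "ennreal \<rho> \<le> ennreal ((1 + real K * \<eta>\<^sup>2) * \<rho>)"
    using assms(1) by (intro ennreal_leI) (simp add: algebra_simps)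
  show "ennreal (real L * (\<eta>\<^sup>2 * max \<zeta> 0))
          \<le> ennreal ((1 / real K + \<eta>\<^sup>2) * ((real L)\<^sup>2 * \<zeta> + real K * (real L)^3 * \<gamma>\<^sup>2 * \<zeta> * \<eta>\<^sup>2 * exp 1))"
  proof (cases "0 \<le> \<zeta>")
    case True
    have "real L * \<zeta> \<le> (real L)\<^sup>2 * \<zeta>"
      using assms(2) True by (intro mult_right_mono) (auto simp: power2_eq_square)
    then have "\<eta>\<^sup>2 * (real L * \<zeta>) \<le> \<eta>\<^sup>2 * ((real L)\<^sup>2 * \<zeta>)"
      by (rule mult_left_mono) simp
    then have "real L * (\<eta>\<^sup>2 * \<zeta>) \<le> \<eta>\<^sup>2 * ((real L)\<^sup>2 * \<zeta>)"
      by (simp add: mult_ac)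
    also have "\<dots> \<le> (1 / real K + \<eta>\<^sup>2) * ((real L)\<^sup>2 * \<zeta> + real K * (real L)^3 * \<gamma>\<^sup>2 * \<zeta> * \<eta>\<^sup>2 * exp 1)"
      using True by (intro mult_mono) auto
    finally show ?thesis
      using True by (intro ennreal_leI) simp
  qed simp
qed simp

theorem lemma7:
  fixes M L :: nat and g c :: "nat \<Rightarrow> nat"
    and f :: "nat \<Rightarrow> nat \<Rightarrow> 'a::euclidean_space \<Rightarrow> real"
    and gf :: "nat \<Rightarrow> nat \<Rightarrow> 'a \<Rightarrow> 'a"
    and F :: "'a \<Rightarrow> real" and gF :: "'a \<Rightarrow> 'a" and wstar :: 'a
    and G :: "nat \<Rightarrow> nat \<Rightarrow> 'a \<Rightarrow> 's \<Rightarrow> 'a" and D :: "nat \<Rightarrow> nat \<Rightarrow> 's measure"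
    and P :: "'b measure" and wt :: "'b \<Rightarrow> 'a"
    and \<omega> :: "(nat \<Rightarrow> nat set) \<Rightarrow> nat \<Rightarrow> nat \<Rightarrow> real"
    and \<mu> \<gamma> \<zeta> \<eta> :: real
  assumes M_pos: "M \<ge> 1" and L_pos: "L \<ge> 1"
    and c_bounds: "\<forall>m<M. 1 \<le> c m \<and> c m \<le> g m"
    \<comment> \<open>global loss and its gradient\<close>
    and F_def: "F = (\<lambda>x. (1 / real (\<Sum>m<M. g m)) * (\<Sum>m<M. \<Sum>u<g m. f m u x))"
    and gF_grad: "\<forall>x. (F has_derivative (\<lambda>h. gF x \<bullet> h)) (at x)"
    and wstar_min: "\<forall>x. F wstar \<le> F x"
    \<comment> \<open>(A1): convex, differentiable (with gradient gf), gamma-smooth\<close>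
    and A1_convex: "\<forall>m<M. \<forall>u<g m. convex_on UNIV (f m u)"
    and A1_grad: "\<forall>m<M. \<forall>u<g m. \<forall>x. (f m u has_derivative (\<lambda>h. gf m u x \<bullet> h)) (at x)"
    and A1_smooth: "\<forall>m<M. \<forall>u<g m. \<forall>x y. norm (gf m u x - gf m u y) \<le> \<gamma> * norm (x - y)"
    \<comment> \<open>(A2): mu-strongly convex\<close>
    and mu_pos: "\<mu> > 0"
    and A2: "\<forall>m<M. \<forall>u<g m. \<forall>x y. (gf m u x - gf m u y) \<bullet> (x - y) \<ge> \<mu> * (norm (x - y))\<^sup>2"
    \<comment> \<open>(A3): stochastic gradient G m u x s with a fresh sample s drawn from D m u\<close>
    and D_prob: "\<forall>m<M. \<forall>u<g m. prob_space (D m u)"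
    and G_meas: "\<forall>m<M. \<forall>u<g m. (\<lambda>(x, s). G m u x s) \<in> borel_measurable (borel \<Otimes>\<^sub>M D m u)"
    and A3_unbiased: "\<forall>m<M. \<forall>u<g m. \<forall>x.
        integrable (D m u) (G m u x) \<and> (\<integral>s. G m u x s \<partial>D m u) = gF x"
    and A3_var: "\<forall>m<M. \<forall>u<g m. \<forall>x.
        (\<integral>\<^sup>+ s. ennreal ((norm (G m u x s - gF x))\<^sup>2) \<partial>D m u) \<le> ennreal \<zeta>"
    \<comment> \<open>current global model w^t: a random vector on the probability space P of past rounds\<close>
    and P_prob: "prob_space P"
    and wt_meas: "wt \<in> borel_measurable P"
    \<comment> \<open>fusion weights (may depend on the drawn clusters)\<close>
    and \<omega>_nonneg: "\<forall>Cs\<in>cluster_choices M g c. \<forall>m<M. \<forall>u\<in>Cs m. \<omega> Cs m u \<ge> 0"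
    and \<omega>_sum: "\<forall>Cs\<in>cluster_choices M g c. (\<Sum>m<M. \<Sum>u\<in>Cs m. \<omega> Cs m u) = 1"
    \<comment> \<open>learning rate\<close>
    and eta_pos: "\<eta> > 0"
    and eta_le: "\<eta> \<le> min (1 / \<mu>) (min (1 / (real L * \<gamma>)) (\<mu> / \<gamma>\<^sup>2))"
  shows
    "nn_integral
       (P \<Otimes>\<^sub>M (measure_pmf (pmf_of_set (cluster_choices M g c)) \<Otimes>\<^sub>M
            (\<Pi>\<^sub>M i\<in>sample_index M g L. D (fst i) (fst (snd i)))))
       (\<lambda>(x, Cs, S). ennreal ((norm
          ((\<Sum>m<M. \<Sum>u\<in>Cs m. \<omega> Cs m u *\<^sub>R
              local_sgd (G m u) \<eta> (wt x) (\<lambda>l. S (m, u, l)) L) - wstar))\<^sup>2))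
     \<le> ennreal ((1 + real (\<Sum>m<M. g m) * \<eta>\<^sup>2) * (1 - \<mu> * \<eta>) ^ L)
         * (\<integral>\<^sup>+ x. ennreal ((norm (wt x - wstar))\<^sup>2) \<partial>P)
       + ennreal ((1 / real (\<Sum>m<M. g m) + \<eta>\<^sup>2)
           * ((real L)\<^sup>2 * \<zeta> + real (\<Sum>m<M. g m) * (real L)^3 * \<gamma>\<^sup>2 * \<zeta> * \<eta>\<^sup>2 * exp 1))"
proof -
  define Q where "Q = (\<Pi>\<^sub>M i\<in>sample_index M g L. D (fst i) (fst (snd i)))"
  define \<zeta>' where "\<zeta>' = max \<zeta> 0"
  define B where "B x = ennreal ((1 - \<mu> * \<eta>) ^ L * (norm (x - wstar))\<^sup>2 + real L * (\<eta>\<^sup>2 * \<zeta>'))" for x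
  have "0 < M" "0 < g 0"
    using M_pos c_bounds by force+
  note gradient = gradient_of_group_average_bounds[OF this F_def gF_grad[rule_format] wstar_min[rule_format]
      A1_grad A1_smooth A2]
  note \<eta> = step_size_bounds[OF mu_pos eta_pos eta_le]
  have device: "(\<integral>\<^sup>+ S. ennreal ((norm (local_sgd (G m u) \<eta> x0 (\<lambda>l. S (m, u, l)) L - wstar))\<^sup>2) \<partial>Q) \<le> B x0"
    if "m < M" "u < g m" for m u x0
    unfolding Q_def B_def
  proof (rule local_sgd_mean_square_error_le[where j="\<lambda>l. (m, u, l)"])
    show "(\<integral>\<^sup>+ s. ennreal ((norm (G m u x s - gF x))\<^sup>2) \<partial>D m u) \<le> ennreal \<zeta>'" for x
      using A3_var that unfolding \<zeta>'_def by (auto intro: order_trans[OF _ ennreal_leI])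
  qed (use that D_prob G_meas A3_unbiased gradient \<eta> eta_pos finite_sample_index in
         \<open>auto simp: sample_index_def \<zeta>'_def intro: injI\<close>)
  have model_meas: "(\<lambda>(x, S). local_sgd (G m u) \<eta> (wt x) (\<lambda>l. S (m, u, l)) L) \<in> borel_measurable (P \<Otimes>\<^sub>M Q)"
    if "m < M" "u < g m" for m u
    unfolding split_beta' Q_def using that wt_meas G_meas measurable_sample_index_component
    by (intro measurable_local_sgd[where D="D m u"] measurable_compose[OF measurable_snd]) auto
  have "prob_space Q"
    unfolding Q_def using D_prob by (intro prob_space_PiM_sample_index) auto
  then have "nn_integral (P \<Otimes>\<^sub>M (measure_pmf (pmf_of_set (cluster_choices M g c)) \<Otimes>\<^sub>M Q))
          (\<lambda>(x, Cs, S). ennreal ((norm ((\<Sum>m<M. \<Sum>u\<in>Cs m. \<omega> Cs m u *\<^sub>R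
              local_sgd (G m u) \<eta> (wt x) (\<lambda>l. S (m, u, l)) L) - wstar))\<^sup>2))
        \<le> (\<integral>\<^sup>+ x. B (wt x) \<partial>P)"
    using c_bounds \<omega>_nonneg \<omega>_sum model_meas device by (intro nn_integral_fused_models_le) auto
  also have "(\<integral>\<^sup>+ x. B (wt x) \<partial>P)
      = ennreal ((1 - \<mu> * \<eta>) ^ L) * (\<integral>\<^sup>+ x. ennreal ((norm (wt x - wstar))\<^sup>2) \<partial>P)
        + ennreal (real L * (\<eta>\<^sup>2 * \<zeta>'))"
    using wt_meas \<eta>(2) unfolding B_def \<zeta>'_def
    by (simp add: ennreal_mult nn_integral_add nn_integral_cmult prob_space.emeasure_space_1[OF P_prob])
  finally show ?thesis
    unfolding Q_def \<zeta>'_def using \<eta>(2) L_pos by (elim order_trans) (intro rate_le_paper_rate; simp)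
qed

end
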